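(* Let $d > 3$ be odd. In the coefficient-choosing game of degree $d$ over $\mathbb{Z}/16\mathbb{Z}$, whichever player makes the last move has a winning strategy.
   Context: The coefficient-choosing game of degree $d$ over $R = \mathbb{Z}/16\mathbb{Z}$: Nora and Wanda alternately choose coefficients of $f(x) = a_d x^d + \cdots + a_0$; on each move the current player picks a not-yet-chosen coefficient and assigns it a value in $R$, subject to $a_d \neq 0$, $a_0 \neq 0$. After all $d+1$ coefficients are chosen, Wanda wins if $f$ has a root in $R$, and Nora wins otherwise. Who moves first is fixed in advance, which determines who makes the last move. *)

theory Defs
  imports Main "HOL-Library.Numeral_Type"
begin

text \<open>The ring R = Z/16Z is the numeral type 16 (a comm_ring_1 with 16 elements).
  A position of the game is a partial assignment of the coefficients a_0..a_d,
  represented as a map from indices to optional values in R.\<close>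

type_synonym position = "nat \<Rightarrow> 16 option"

definition legal_move :: "nat \<Rightarrow> position \<Rightarrow> nat \<Rightarrow> 16 \<Rightarrow> bool" where
  "legal_move d a i v \<longleftrightarrow> i \<le> d \<and> a i = None \<and> ((i = 0 \<or> i = d) \<longrightarrow> v \<noteq> 0)"

text \<open>Final outcome: f(x) = sum a_i x^i has a root in R (Wanda wins).\<close>
definition has_root :: "nat \<Rightarrow> position \<Rightarrow> bool" where
  "has_root d a \<longleftrightarrow> (\<exists>x::16. (\<Sum>i\<le>d. the (a i) * x ^ i) = 0)"

fun forces :: "(position \<Rightarrow> bool) \<Rightarrow> nat \<Rightarrow> nat \<Rightarrow> position \<Rightarrow> bool \<Rightarrow> bool" where
  "forces goal d 0 a t = goal a"
| "forces goal d (Suc n) a True =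
     (\<exists>i v. legal_move d a i v \<and> forces goal d n (a(i := Some v)) False)"
| "forces goal d (Suc n) a False =
     (\<forall>i v. legal_move d a i v \<longrightarrow> forces goal d n (a(i := Some v)) True)"

definition start :: position where "start = (\<lambda>_. None)"

definition wanda_wins :: "nat \<Rightarrow> bool \<Rightarrow> bool" where
  "wanda_wins d wanda_first = forces (has_root d) d (Suc d) start wanda_first"

definition nora_wins :: "nat \<Rightarrow> bool \<Rightarrow> bool" where
  "nora_wins d wanda_first = forces (\<lambda>a. \<not> has_root d a) d (Suc d) start (\<not> wanda_first)"

end

(*
  Wanda, moving last, spends her first moves on the two constrained coefficients a_0 and a_d
  (she has at least three moves since d >= 5).  Her final move then sets an unconstrained
  coefficient, which she chooses so that 1 is a root.

  Nora, moving last, uses that modulo 16 the value f(2y) = a_0 + 2 a_1 y + 4 a_2 y^2 + 8 a_3 y^3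
  depends only on a_0, ..., a_3.  Answering Wanda's opening move she makes a_0 odd, or sets
  a_1 = 0 if a_0 is not divisible by 4, or, if a_0 is 4, 8 or 12, sets a_1 = 0 and after
  Wanda's next move a suitable a_3 (if Wanda took a_2) or a_2 (otherwise).  From then on no
  completion has an even root.  With her last move she makes f(1) odd; as x - 1 divides
  f(x) - f(1), no odd x is a root either.
*)
theory Submission
  imports Defs
begin

section \<open>Arithmetic in Z/16Z\<close>

lemma all_16_eq:
  "(\<forall>x::16. P x) \<longleftrightarrow>
    P 0 \<and> P 1 \<and> P 2 \<and> P 3 \<and> P 4 \<and> P 5 \<and> P 6 \<and> P 7 \<and>
    P 8 \<and> P 9 \<and> P 10 \<and> P 11 \<and> P 12 \<and> P 13 \<and> P 14 \<and> P 15"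
proof (intro iffI allI)
  fix x :: 16
  assume "P 0 \<and> P 1 \<and> P 2 \<and> P 3 \<and> P 4 \<and> P 5 \<and> P 6 \<and> P 7 \<and>
    P 8 \<and> P 9 \<and> P 10 \<and> P 11 \<and> P 12 \<and> P 13 \<and> P 14 \<and> P 15"
  moreover obtain z where "x = of_int z" "0 \<le> z" "z < 16"
    by (cases x) auto
  moreover from this have "z = 0 \<or> z = 1 \<or> z = 2 \<or> z = 3 \<or> z = 4 \<or> z = 5 \<or> z = 6 \<or> z = 7 \<or>
    z = 8 \<or> z = 9 \<or> z = 10 \<or> z = 11 \<or> z = 12 \<or> z = 13 \<or> z = 14 \<or> z = 15"
    by arith
  ultimately show "P x" by auto
qed auto

lemma two_dvd_or_two_dvd_minus_one_16: "2 dvd x \<or> 2 dvd (x - 1 :: 16)"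
proof -
  obtain z where x: "x = of_int z" by (cases x) auto
  have "\<exists>k. z = 2 * k \<or> z = 2 * k + 1" by presburger
  then obtain k where "z = 2 * k \<or> z = 2 * k + 1" ..
  then have "x = 2 * of_int k \<or> x - 1 = 2 * of_int k" using x by auto
  then show ?thesis by (metis dvd_triv_left)
qed

lemma not_two_dvd_one_16: "\<not> 2 dvd (1 :: 16)"
proof -
  have "\<forall>k::16. 1 \<noteq> 2 * k" unfolding all_16_eq by simp
  then show ?thesis by auto
qed

lemma four_dvd_16_cases: "4 dvd (v :: 16) \<Longrightarrow> v \<in> {0, 4, 8, 12}"
proof -
  have "\<forall>k::16. 4 * k \<in> {0, 4, 8, 12}" unfolding all_16_eq by simp
  then show "4 dvd v \<Longrightarrow> v \<in> {0, 4, 8, 12}" by auto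
qed

lemma sum_powers_even_point_16:
  fixes c :: "nat \<Rightarrow> 16"
  assumes "3 \<le> d"
  shows "(\<Sum>i\<le>d. c i * (2 * y) ^ i) = c 0 + 2 * c 1 * y + 4 * c 2 * y ^ 2 + 8 * c 3 * y ^ 3"
proof -
  have vanish: "(2 * y) ^ i = 0" if "4 \<le> i" for i
  proof -
    obtain k where "i = 4 + k" using \<open>4 \<le> i\<close> le_Suc_ex by blast
    then have "(2 * y) ^ i = 2 ^ 4 * (y ^ 4 * (2 ^ k * y ^ k))"
      by (simp only: power_add power_mult_distrib mult.assoc)
    also have "(2 :: 16) ^ 4 = 0" by simp
    finally show ?thesis by simp
  qed
  have "{..d} = {..3} \<union> {4..d}" using assms by auto
  then have "(\<Sum>i\<le>d. c i * (2 * y) ^ i) =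
      (\<Sum>i\<le>3. c i * (2 * y) ^ i) + (\<Sum>i\<in>{4..d}. c i * (2 * y) ^ i)"
    by (simp add: sum.union_disjoint)
  moreover have "(\<Sum>i\<in>{4..d}. c i * (2 * y) ^ i) = 0"
    by (rule sum.neutral) (metis atLeastAtMost_iff vanish mult_zero_right)
  moreover have "(\<Sum>i\<le>3. c i * (2 * y) ^ i) = c 0 + 2 * c 1 * y + 4 * c 2 * y ^ 2 + 8 * c 3 * y ^ 3"
    by (simp add: atMost_nat_numeral power_mult_distrib algebra_simps)
  ultimately show ?thesis by simp
qed

lemma cubic_coeff_answer_16:
  assumes "v \<in> {4, 8, 12}"
  shows "\<exists>c3. \<forall>y. v + 4 * w * y ^ 2 + 8 * c3 * y ^ 3 \<noteq> (0 :: 16)"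
proof -
  have "\<forall>v \<in> {4, 8, 12}. \<forall>w :: 16.
      (\<forall>y. v + 4 * w * y ^ 2 + 8 * 0 * y ^ 3 \<noteq> 0) \<or> (\<forall>y. v + 4 * w * y ^ 2 + 8 * 1 * y ^ 3 \<noteq> 0)"
    unfolding all_16_eq by simp
  with assms show ?thesis by blast
qed

lemma quadratic_coeff_answer_16:
  assumes "v \<in> {4, 8, 12}"
  shows "\<exists>w. \<forall>c3 y. v + 4 * w * y ^ 2 + 8 * c3 * y ^ 3 \<noteq> (0 :: 16)"
proof -
  have "\<forall>c3 y :: 16. 4 + 4 * 0 * y ^ 2 + 8 * c3 * y ^ 3 \<noteq> 0"
    and "\<forall>c3 y :: 16. 8 + 4 * 1 * y ^ 2 + 8 * c3 * y ^ 3 \<noteq> 0"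
    and "\<forall>c3 y :: 16. 12 + 4 * 0 * y ^ 2 + 8 * c3 * y ^ 3 \<noteq> 0"
    unfolding all_16_eq by simp_all
  with assms show ?thesis by blast
qed

lemma dvd_sum_powers_diff:
  fixes c :: "nat \<Rightarrow> 'a::comm_ring_1"
  shows "x - y dvd (\<Sum>i\<le>d. c i * x ^ i) - (\<Sum>i\<le>d. c i * y ^ i)"
proof -
  have "x - y dvd c i * (x ^ i - y ^ i)" for i
    by (simp add: power_diff_sumr2)
  then have "x - y dvd (\<Sum>i\<le>d. c i * (x ^ i - y ^ i))"
    by (rule dvd_sum)
  then show ?thesis
    by (simp add: sum_subtractf right_diff_distrib)
qed

lemma add_mult_neq_zero_if_not_dvd:
  fixes u :: "'a::comm_ring_1"
  shows "\<not> m dvd u \<Longrightarrow> u + m * z \<noteq> 0"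
  by (metis dvd_0_right dvd_add_times_triv_right_iff mult.commute)

lemma odd_shift_one_or_two:
  fixes s :: "'a::comm_ring_1"
  assumes "\<not> 2 dvd (1 :: 'a)"
  obtains v where "v \<in> {1, 2}" "\<not> 2 dvd v + s"
proof (cases "2 dvd s")
  case True
  with assms have "\<not> 2 dvd 1 + s" by (simp add: dvd_add_left_iff)
  with that show ?thesis by blast
next
  case False
  then have "\<not> 2 dvd 2 + s" by (simp add: dvd_add_right_iff)
  with that show ?thesis by blast
qed

lemma sum_fun_upd_Some:
  fixes a :: "nat \<Rightarrow> 'a::comm_semiring_1 option"
  assumes "j \<le> d"
  shows "(\<Sum>i\<le>d. the ((a(j := Some v)) i) * x ^ i) = v * x ^ j + (\<Sum>i\<in>{..d} - {j}. the (a i) * x ^ i)"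
proof -
  have "(\<Sum>i\<in>{..d} - {j}. the ((a(j := Some v)) i) * x ^ i) = (\<Sum>i\<in>{..d} - {j}. the (a i) * x ^ i)"
    by (rule sum.cong) auto
  with assms show ?thesis by (simp add: sum.remove[of "{..d}" j])
qed

section \<open>Strategies preserving an invariant\<close>

definition free :: "nat \<Rightarrow> position \<Rightarrow> nat set" where
  "free d a = {i. i \<le> d \<and> a i = None}"

lemma finite_free: "finite (free d a)"
  unfolding free_def by (rule finite_subset[of _ "{..d}"]) auto

lemma card_free_start: "card (free d start) = Suc d"
proof -
  have "free d start = {..d}" unfolding free_def start_def by auto
  then show ?thesis by simp
qed

lemma legal_move_free: "legal_move d a i v \<Longrightarrow> i \<in> free d a"
  unfolding legal_move_def free_def by auto

lemma legal_move_one: "i \<in> free d a \<Longrightarrow> legal_move d a i 1"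
  unfolding legal_move_def free_def by auto

lemma free_fun_upd: "i \<in> free d a \<Longrightarrow> free d (a(i := Some v)) = free d a - {i}"
  unfolding free_def by auto

lemma card_free_fun_upd: "i \<in> free d a \<Longrightarrow> card (free d (a(i := Some v))) = card (free d a) - 1"
  by (simp add: free_fun_upd finite_free)

(* The strategist moves last, i.e. exactly when an odd number of coefficients is free; mine and
   theirs are the invariants kept when the strategist, respectively the opponent, is to move. *)
lemma forces_by_invariant:
  fixes mine theirs :: "position \<Rightarrow> bool"
  assumes last_move: "\<And>p. card (free d p) = 1 \<Longrightarrow> mine p \<Longrightarrow>
      \<exists>i v. legal_move d p i v \<and> goal (p(i := Some v))"
    and my_move: "\<And>p. odd (card (free d p)) \<Longrightarrow> 1 < card (free d p) \<Longrightarrow> mine p \<Longrightarrow>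
      \<exists>i v. legal_move d p i v \<and> theirs (p(i := Some v))"
    and their_move: "\<And>p i v. even (card (free d p)) \<Longrightarrow> theirs p \<Longrightarrow> legal_move d p i v \<Longrightarrow>
      mine (p(i := Some v))"
  shows "card (free d a) = n \<Longrightarrow> 0 < n \<Longrightarrow> (if odd n then mine a else theirs a) \<Longrightarrow>
    forces goal d n a (odd n)"
proof (induction n arbitrary: a)
  case 0
  then show ?case by simp
next
  case (Suc m)
  have card_upd: "card (free d (a(i := Some v))) = m" if "legal_move d a i v" for i v
    using card_free_fun_upd[OF legal_move_free[OF that]] Suc.prems(1) by simp
  show ?case
  proof (cases "odd (Suc m)")
    case True
    show ?thesis
    proof (cases "m = 0")
      case True
      then show ?thesis using last_move Suc.prems by auto
    next
      case False
      with \<open>odd (Suc m)\<close> Suc.prems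
      have "odd (card (free d a))" "1 < card (free d a)" "mine a" by auto
      then obtain i v where move: "legal_move d a i v" "theirs (a(i := Some v))"
        using my_move by blast
      have "even m" "0 < m" using \<open>odd (Suc m)\<close> False by auto
      then have "forces goal d m (a(i := Some v)) (odd m)"
        using card_upd[OF move(1)] move(2) Suc.IH by simp
      with move(1) \<open>odd (Suc m)\<close> show ?thesis by auto
    qed
  next
    case False
    then have "odd m" "0 < m" by (auto elim: oddE)
    have "forces goal d m (a(i := Some v)) True" if "legal_move d a i v" for i v
      using Suc.IH card_upd[OF that] their_move[OF _ _ that] Suc.prems False \<open>odd m\<close> \<open>0 < m\<close>
      by simp
    with False show ?thesis by simp
  qed
qed

section \<open>Wanda moving last\<close>

lemma root_by_inner_coeff:
  assumes "j \<in> free d a" "j \<notin> {0, d}"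
  shows "\<exists>v. legal_move d a j v \<and> has_root d (a(j := Some v))"
proof
  define v where "v = - (\<Sum>i\<in>{..d} - {j}. the (a i))"
  have "j \<le> d" using assms(1) by (simp add: free_def)
  then have "(\<Sum>i\<le>d. the ((a(j := Some v)) i) * 1 ^ i) = v * 1 ^ j + (\<Sum>i\<in>{..d} - {j}. the (a i) * 1 ^ i)"
    by (rule sum_fun_upd_Some)
  also have "\<dots> = 0" by (simp add: v_def)
  finally have "has_root d (a(j := Some v))" unfolding has_root_def by blast
  moreover have "legal_move d a j v" using assms by (auto simp: legal_move_def free_def)
  ultimately show "legal_move d a j v \<and> has_root d (a(j := Some v))" by blast
qed

definition unset_ends :: "nat \<Rightarrow> position \<Rightarrow> nat" where
  "unset_ends d a = card (free d a \<inter> {0, d})"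

lemma unset_ends_fun_upd:
  assumes "i \<in> free d a"
  shows "unset_ends d (a(i := Some v)) = (if i \<in> {0, d} then unset_ends d a - 1 else unset_ends d a)"
proof -
  have "free d (a(i := Some v)) \<inter> {0, d} = free d a \<inter> {0, d} - {i}"
    using free_fun_upd[OF assms] by auto
  then show ?thesis
    unfolding unset_ends_def using assms by (auto simp: card_Diff_singleton)
qed

lemma unset_ends_fun_upd_le: "i \<in> free d a \<Longrightarrow> unset_ends d (a(i := Some v)) \<le> unset_ends d a"
  by (simp add: unset_ends_fun_upd)

lemma wanda_fills_an_end:
  assumes card: "odd (card (free d p))" "1 < card (free d p)"
    and "unset_ends d p \<le> card (free d p) div 2"
  shows "\<exists>i. legal_move d p i 1 \<and> unset_ends d (p(i := Some 1)) < card (free d (p(i := Some 1))) div 2"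
proof -
  obtain i where i: "i \<in> free d p" and end_first: "free d p \<inter> {0, d} \<noteq> {} \<Longrightarrow> i \<in> {0, d}"
    using card by (metis Int_iff card.empty ex_in_conv not_less_zero)
  have half: "(card (free d p) - 1) div 2 = card (free d p) div 2" "0 < card (free d p) div 2"
    using card by (auto elim!: oddE)
  have "unset_ends d p = 0" if "i \<notin> {0, d}"
    using end_first that unfolding unset_ends_def by auto
  then have "unset_ends d (p(i := Some 1)) < (card (free d p) - 1) div 2"
    using assms(3) half by (auto simp: unset_ends_fun_upd[OF i])
  with legal_move_one[OF i] show ?thesis
    by (auto simp: card_free_fun_upd[OF i])
qed

lemma wanda_forces_root:
  assumes "even (card (free d a))" "unset_ends d a < card (free d a) div 2"
  shows "forces (has_root d) d (card (free d a)) a False"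
proof -
  \<comment> \<open>On Wanda's turn, card (free d p) div 2 is the number of her moves before the last one.\<close>
  let ?mine = "\<lambda>p. unset_ends d p \<le> card (free d p) div 2"
  let ?theirs = "\<lambda>p. unset_ends d p < card (free d p) div 2"
  have "forces (has_root d) d (card (free d a)) a (odd (card (free d a)))"
  proof (rule forces_by_invariant[of d ?mine "has_root d" ?theirs])
    fix p
    assume "card (free d p) = 1" "?mine p"
    then obtain j where j: "free d p = {j}" "unset_ends d p = 0"
      by (auto simp: card_Suc_eq)
    then have "j \<notin> {0, d}"
      unfolding unset_ends_def by (auto simp: finite_free)
    with j show "\<exists>i v. legal_move d p i v \<and> has_root d (p(i := Some v))"
      using root_by_inner_coeff by blast
  next
    fix p
    assume "odd (card (free d p))" "1 < card (free d p)" "?mine p"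
    then show "\<exists>i v. legal_move d p i v \<and> ?theirs (p(i := Some v))"
      using wanda_fills_an_end by blast
  next
    fix p i v
    assume "even (card (free d p))" "?theirs p" "legal_move d p i v"
    moreover have "i \<in> free d p" using \<open>legal_move d p i v\<close> by (rule legal_move_free)
    ultimately show "?mine (p(i := Some v))"
      using unset_ends_fun_upd_le[of i d p v] card_free_fun_upd[of i d p v] by (auto elim!: evenE)
  qed (use assms in auto)
  then show ?thesis using assms(1) by simp
qed

section \<open>Nora moving last\<close>

lemma map_le_Some_compD: "a \<subseteq>\<^sub>m Some \<circ> c \<Longrightarrow> a i = Some v \<Longrightarrow> c i = v"
  by (auto simp: map_le_def dom_def)

definition avoids_even_roots :: "nat \<Rightarrow> position \<Rightarrow> bool" where
  "avoids_even_roots d a \<longleftrightarrow>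
    (\<forall>c. a \<subseteq>\<^sub>m Some \<circ> c \<longrightarrow> (\<forall>x. 2 dvd x \<longrightarrow> (\<Sum>i\<le>d. c i * x ^ i) \<noteq> 0))"

lemma avoids_even_roots_fun_upd:
  assumes "avoids_even_roots d a" "a i = None"
  shows "avoids_even_roots d (a(i := Some v))"
proof -
  have "a \<subseteq>\<^sub>m a(i := Some v)"
    using assms(2) by (auto simp: map_le_def)
  with assms(1) show ?thesis
    unfolding avoids_even_roots_def by (meson map_le_trans)
qed

lemma avoids_even_rootsI:
  assumes "3 \<le> d"
    and "\<And>c y. a \<subseteq>\<^sub>m Some \<circ> c \<Longrightarrow> c 0 + 2 * c 1 * y + 4 * c 2 * y ^ 2 + 8 * c 3 * y ^ 3 \<noteq> 0"
  shows "avoids_even_roots d a"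
  unfolding avoids_even_roots_def
proof (intro allI impI)
  fix c and x :: 16
  assume c: "a \<subseteq>\<^sub>m Some \<circ> c" and "2 dvd x"
  then obtain y where "x = 2 * y" by blast
  moreover have "(\<Sum>i\<le>d. c i * (2 * y) ^ i) \<noteq> 0"
    unfolding sum_powers_even_point_16[OF assms(1)] by (rule assms(2)[OF c])
  ultimately show "(\<Sum>i\<le>d. c i * x ^ i) \<noteq> 0" by simp
qed

lemma no_root_if_avoids_even_roots:
  assumes "avoids_even_roots d a" "\<not> 2 dvd (\<Sum>i\<le>d. the (a i))"
  shows "\<not> has_root d a"
proof
  assume "has_root d a"
  then obtain x where root: "(\<Sum>i\<le>d. the (a i) * x ^ i) = 0"
    unfolding has_root_def by blast
  have "a \<subseteq>\<^sub>m Some \<circ> (\<lambda>i. the (a i))"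
    by (auto simp: map_le_def)
  with assms(1) root have "\<not> 2 dvd x"
    unfolding avoids_even_roots_def by blast
  then have "2 dvd x - 1"
    using two_dvd_or_two_dvd_minus_one_16 by blast
  also have "x - 1 dvd (\<Sum>i\<le>d. the (a i) * x ^ i) - (\<Sum>i\<le>d. the (a i) * 1 ^ i)"
    by (rule dvd_sum_powers_diff)
  finally show False
    using root assms(2) by simp
qed

lemma no_root_by_free_coeff:
  assumes "j \<in> free d a" "avoids_even_roots d a"
  shows "\<exists>v. legal_move d a j v \<and> \<not> has_root d (a(j := Some v))"
proof -
  have j: "j \<le> d" "a j = None" using assms(1) by (auto simp: free_def)
  obtain v :: 16 where v: "v \<in> {1, 2}" "\<not> 2 dvd v + (\<Sum>i\<in>{..d} - {j}. the (a i) * 1 ^ i)"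
    using odd_shift_one_or_two not_two_dvd_one_16 by blast
  have "(\<Sum>i\<le>d. the ((a(j := Some v)) i) * 1 ^ i) = v * 1 ^ j + (\<Sum>i\<in>{..d} - {j}. the (a i) * 1 ^ i)"
    using j(1) by (rule sum_fun_upd_Some)
  with v(2) have "\<not> 2 dvd (\<Sum>i\<le>d. the ((a(j := Some v)) i))" by simp
  moreover have "avoids_even_roots d (a(j := Some v))"
    using assms(2) j(2) by (rule avoids_even_roots_fun_upd)
  moreover have "legal_move d a j v"
    using j v(1) by (auto simp: legal_move_def)
  ultimately show ?thesis
    using no_root_if_avoids_even_roots by blast
qed

lemma nora_forces_no_root:
  assumes "even (card (free d a))" "0 < card (free d a)" "avoids_even_roots d a"
  shows "forces (\<lambda>b. \<not> has_root d b) d (card (free d a)) a False"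
proof -
  have "forces (\<lambda>b. \<not> has_root d b) d (card (free d a)) a (odd (card (free d a)))"
  proof (rule forces_by_invariant[of d "avoids_even_roots d" _ "avoids_even_roots d"])
    fix p
    assume "card (free d p) = 1" "avoids_even_roots d p"
    then obtain j where "j \<in> free d p" "avoids_even_roots d p"
      by (auto simp: card_Suc_eq)
    then show "\<exists>i v. legal_move d p i v \<and> \<not> has_root d (p(i := Some v))"
      using no_root_by_free_coeff by blast
  next
    fix p
    assume "1 < card (free d p)" "avoids_even_roots d p"
    then obtain i where "i \<in> free d p" "avoids_even_roots d p"
      by (metis card.empty ex_in_conv not_less_zero)
    then show "\<exists>i v. legal_move d p i v \<and> avoids_even_roots d (p(i := Some v))"
      using legal_move_one avoids_even_roots_fun_upd by (fastforce simp: free_def)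
  next
    fix p i v
    assume "avoids_even_roots d p" "legal_move d p i v"
    then show "avoids_even_roots d (p(i := Some v))"
      by (auto simp: legal_move_def intro: avoids_even_roots_fun_upd)
  qed (use assms in auto)
  then show ?thesis using assms(1) by simp
qed

lemma nora_forces_by_avoiding_move:
  assumes "legal_move d a i v" "avoids_even_roots d (a(i := Some v))"
    and "odd (card (free d a))" "1 < card (free d a)"
  shows "forces (\<lambda>b. \<not> has_root d b) d (card (free d a)) a True"
proof -
  obtain n where n: "card (free d a) = Suc n"
    using assms(4) by (cases "card (free d a)") auto
  have "card (free d (a(i := Some v))) = n"
    using card_free_fun_upd[OF legal_move_free[OF assms(1)]] n by simp
  then have "forces (\<lambda>b. \<not> has_root d b) d n (a(i := Some v)) False"
    using nora_forces_no_root[of d "a(i := Some v)"] assms n by auto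
  with assms(1) n show ?thesis by auto
qed

lemma avoids_even_roots_odd_constant:
  assumes "3 \<le> d" "a 0 = Some u" "\<not> 2 dvd u"
  shows "avoids_even_roots d a"
proof (rule avoids_even_rootsI[OF assms(1)])
  fix c y assume "a \<subseteq>\<^sub>m Some \<circ> c"
  then have "c 0 = u" using assms(2) by (rule map_le_Some_compD)
  then show "c 0 + 2 * c 1 * y + 4 * c 2 * y ^ 2 + 8 * c 3 * y ^ 3 \<noteq> 0"
    using add_mult_neq_zero_if_not_dvd[OF assms(3), of "c 1 * y + 2 * c 2 * y ^ 2 + 4 * c 3 * y ^ 3"]
    by (simp add: algebra_simps)
qed

lemma avoids_even_roots_no_linear_term:
  assumes "3 \<le> d" "a 0 = Some u" "a 1 = Some 0" "\<not> 4 dvd u"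
  shows "avoids_even_roots d a"
proof (rule avoids_even_rootsI[OF assms(1)])
  fix c y assume le: "a \<subseteq>\<^sub>m Some \<circ> c"
  have "c 0 = u" "c 1 = 0" using assms(2,3) by (auto intro!: map_le_Some_compD[OF le])
  then show "c 0 + 2 * c 1 * y + 4 * c 2 * y ^ 2 + 8 * c 3 * y ^ 3 \<noteq> 0"
    using add_mult_neq_zero_if_not_dvd[OF assms(4), of "c 2 * y ^ 2 + 2 * c 3 * y ^ 3"]
    by (simp add: algebra_simps)
qed

lemma avoiding_reply_multiple_of_four:
  assumes d: "5 \<le> d" and v: "v \<in> {4, 8, 12}"
    and move: "legal_move d (start(0 := Some v, 1 := Some 0)) j w"
  defines "q \<equiv> start(0 := Some v, 1 := Some 0, j := Some w)"
  shows "\<exists>k u. legal_move d q k u \<and> avoids_even_roots d (q(k := Some u))"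
proof -
  have j: "j \<noteq> 0" "j \<noteq> 1" "q j = Some w"
    using move by (auto simp: legal_move_def q_def split: if_splits)
  show ?thesis
  proof (cases "j = 2")
    case True
    obtain c3 where c3: "\<forall>y. v + 4 * w * y ^ 2 + 8 * c3 * y ^ 3 \<noteq> 0"
      using cubic_coeff_answer_16[OF v] by blast
    have "legal_move d q 3 c3" using d True by (auto simp: legal_move_def start_def q_def)
    moreover have "avoids_even_roots d (q(3 := Some c3))"
    proof (rule avoids_even_rootsI)
      fix c y assume le: "q(3 := Some c3) \<subseteq>\<^sub>m Some \<circ> c"
      have "c 0 = v" "c 1 = 0" "c 2 = w" "c 3 = c3"
        using True by (auto intro!: map_le_Some_compD[OF le] simp: q_def)
      with c3 show "c 0 + 2 * c 1 * y + 4 * c 2 * y ^ 2 + 8 * c 3 * y ^ 3 \<noteq> 0" by simp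
    qed (use d in simp)
    ultimately show ?thesis by blast
  next
    case False
    obtain w2 where w2: "\<forall>c3 y. v + 4 * w2 * y ^ 2 + 8 * c3 * y ^ 3 \<noteq> 0"
      using quadratic_coeff_answer_16[OF v] by blast
    have "legal_move d q 2 w2" using d False by (auto simp: legal_move_def start_def q_def)
    moreover have "avoids_even_roots d (q(2 := Some w2))"
    proof (rule avoids_even_rootsI)
      fix c y assume le: "q(2 := Some w2) \<subseteq>\<^sub>m Some \<circ> c"
      have "c 0 = v" "c 1 = 0" "c 2 = w2"
        using j by (auto intro!: map_le_Some_compD[OF le] simp: q_def)
      with w2 show "c 0 + 2 * c 1 * y + 4 * c 2 * y ^ 2 + 8 * c 3 * y ^ 3 \<noteq> 0" by simp
    qed (use d in simp)
    ultimately show ?thesis by blast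
  qed
qed

lemma nora_answers_multiple_of_four:
  assumes d: "5 \<le> d" "odd d" and v: "v \<in> {4, 8, 12}"
  shows "forces (\<lambda>b. \<not> has_root d b) d (d - 1) (start(0 := Some v, 1 := Some 0)) False"
proof -
  let ?p = "start(0 := Some v, 1 := Some 0)"
  have "free d ?p = {..d} - {0, 1}" by (auto simp: free_def start_def)
  then have card: "card (free d ?p) = Suc (d - 2)" using d by simp
  have "forces (\<lambda>b. \<not> has_root d b) d (d - 2) (?p(j := Some w)) True"
    if move: "legal_move d ?p j w" for j w
  proof -
    have card_q: "card (free d (?p(j := Some w))) = d - 2"
      using card card_free_fun_upd[OF legal_move_free[OF move]] by simp
    moreover have "odd (d - 2)" "1 < d - 2" using d by presburger+
    ultimately show ?thesis
      using avoiding_reply_multiple_of_four[OF d(1) v move] nora_forces_by_avoiding_move by metis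
  qed
  moreover have "d - 1 = Suc (d - 2)" using d by simp
  ultimately show ?thesis by (simp only:) simp
qed

lemma nora_answers_first_move:
  assumes d: "5 \<le> d" "odd d" and first: "legal_move d start i v"
  shows "forces (\<lambda>b. \<not> has_root d b) d d (start(i := Some v)) True"
proof -
  let ?a = "start(i := Some v)"
  have card: "card (free d ?a) = d"
    using card_free_fun_upd[OF legal_move_free[OF first]] card_free_start by simp
  then have odd_card: "odd (card (free d ?a))" "1 < card (free d ?a)"
    using d by auto
  consider (other) "i \<noteq> 0" | (unit) "i = 0" "\<not> 4 dvd v" | (four) "i = 0" "v \<in> {4, 8, 12}"
    using first four_dvd_16_cases by (auto simp: legal_move_def)
  then show ?thesis
  proof cases
    case other
    have "legal_move d ?a 0 1" using other by (simp add: legal_move_def start_def)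
    moreover have "avoids_even_roots d (?a(0 := Some 1))"
      using d not_two_dvd_one_16 by (intro avoids_even_roots_odd_constant) auto
    ultimately show ?thesis
      using nora_forces_by_avoiding_move odd_card card by metis
  next
    case unit
    have "legal_move d ?a 1 0" using unit d by (simp add: legal_move_def start_def)
    moreover have "avoids_even_roots d (?a(1 := Some 0))"
      using d unit by (intro avoids_even_roots_no_linear_term) auto
    ultimately show ?thesis
      using nora_forces_by_avoiding_move odd_card card by metis
  next
    case four
    have "legal_move d ?a 1 0" using four d by (simp add: legal_move_def start_def)
    moreover have "forces (\<lambda>b. \<not> has_root d b) d (d - 1) (?a(1 := Some 0)) False"
      using nora_answers_multiple_of_four[OF d four(2)] four(1) by simp
    moreover have "d = Suc (d - 1)" using d by simp
    ultimately show ?thesis by (metis forces.simps(2))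
  qed
qed

theorem lemma10:
  fixes d :: nat
  assumes "odd d" and "d > 3"
  shows "wanda_wins d False \<and> nora_wins d True"
proof
  have d: "5 \<le> d" using assms by presburger
  have "unset_ends d start = 2"
    using d by (simp add: unset_ends_def free_def start_def)
  moreover have "even (card (free d start))" "2 < card (free d start) div 2"
    using assms d by (auto simp: card_free_start)
  ultimately show "wanda_wins d False"
    using wanda_forces_root[of d start] unfolding wanda_wins_def by (simp add: card_free_start)
  show "nora_wins d True"
    unfolding nora_wins_def using nora_answers_first_move[OF d assms(1)] by simp
qed

end
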